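(* For procedure $\mathcal{G}_{APL}(p,\mathrm{lb},\beta,\theta)$, run with any $\alpha_k\in(0,1]$ and with $\mathrm{lb}\le f^*$, the following hold: (a) $\{X'_k\}_{k\ge0}$ is a sequence of localizers of $\mathcal{L}_f(l)$; (b) $\underline f_0\le\underline f_1\le\cdots\le\underline f_k\le f^*$ and $\overline f_0\ge\overline f_1\ge\cdots\ge\overline f_k\ge f^*$ for any $k\ge1$; (c) the problem defining $x_k$ in Step 2 is always feasible unless the procedure terminates; (d) $\emptyset\ne\underline X_k\subseteq\overline X_k$ for any $k\ge1$, so Step 4 is always feasible unless the procedure terminates; (e) whenever the procedure terminates, $f(p^+)-\mathrm{lb}^+\le q\,[f(p)-\mathrm{lb}]$, where $q\equiv q(\beta,\theta):=1-(1-\theta)\min\{\beta,1-\beta\}$.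
   Context: Problem: $f^*=\min_{x\in X}f(x)$, $X\subseteq\mathbb{R}^n$ nonempty convex compact, $\mathbb{R}^n$ with an arbitrary norm $\|\cdot\|$; $f:X\to\mathbb{R}$ convex with oracle returning $f(x)$ and $f'(x)\in\partial f(x)$; $h(z,x):=f(z)+\langle f'(z),x-z\rangle$; $\mathcal{L}_f(l):=\{x\in X:f(x)\le l\}$; a localizer of $\mathcal{L}_f(l)$ is a convex compact set $X'$ with $\mathcal{L}_f(l)\subseteq X'\subseteq X$. $\omega:X\to\mathbb{R}$ is a prox-function: differentiable and strongly convex with modulus $\sigma_\omega>0$, i.e. $\langle\nabla\omega(x)-\nabla\omega(z),x-z\rangle\ge\sigma_\omega\|x-z\|^2$ on $X$. Procedure $\mathcal{G}_{APL}(p,\mathrm{lb},\beta,\theta)$ ($p\in X$, $\beta,\theta\in(0,1)$, given $\alpha_k\in(0,1]$): Step 0: $x^u_0=p$, $\overline f_0=f(p)$, $\underline f_0=\mathrm{lb}$, $l=\beta\underline f_0+(1-\beta)\overline f_0$; choose $x_0\in X$ and an initial localizer $X'_0$ of $\mathcal{L}_f(l)$ (e.g. $x_0=p$, $X'_0=X$); $d_\omega(x)=\omega(x)-[\omega(x_0)+\langle\nabla\omega(x_0),x-x_0\rangle]$; $k=1$. Step 1: $x^l_k=(1-\alpha_k)x^u_{k-1}+\alpha_kx_{k-1}$, $\underline h_k=\min_{x\in X'_{k-1}}h(x^l_k,x)$ ($+\infty$ if infeasible), $\underline f_k=\max\{\underline f_{k-1},\min\{l,\underline h_k\}\}$; if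 $\underline f_k\ge l-\theta(l-\underline f_0)$ terminate with $p^+=x^u_{k-1}$, $\mathrm{lb}^+=\underline f_k$. Step 2: $x_k=\operatorname{argmin}_{x\in X'_{k-1}}\{d_\omega(x):h(x^l_k,x)\le l\}$. Step 3: $\overline f_k=\min\{\overline f_{k-1},f(\alpha_kx_k+(1-\alpha_k)x^u_{k-1})\}$, choose $x^u_k$ with $f(x^u_k)=\overline f_k$; if $\overline f_k\le l+\theta(\overline f_0-l)$ terminate with $p^+=x^u_k$, $\mathrm{lb}^+=\underline f_k$. Step 4: choose a closed convex set $X'_k$ with $\underline X_k\subseteq X'_k\subseteq\overline X_k$, where $\underline X_k:=\{x\in X'_{k-1}:h(x^l_k,x)\le l\}$ and $\overline X_k:=\{x\in X:\langle\nabla d_\omega(x_k),x-x_k\rangle\ge0\}$. Step 5: $k\leftarrow k+1$, go to Step 1. *)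

theory Defs
  imports "HOL-Analysis.Analysis"
begin

definition is_norm :: "('a::real_vector \<Rightarrow> real) \<Rightarrow> bool" where
  "is_norm N \<longleftrightarrow> (\<forall>x. 0 \<le> N x) \<and> (\<forall>x. N x = 0 \<longleftrightarrow> x = 0)
     \<and> (\<forall>c x. N (c *\<^sub>R x) = \<bar>c\<bar> * N x) \<and> (\<forall>x y. N (x + y) \<le> N x + N y)"

definition is_subgradient :: "'a::real_inner set \<Rightarrow> ('a \<Rightarrow> real) \<Rightarrow> 'a \<Rightarrow> 'a \<Rightarrow> bool" where
  "is_subgradient X f z g \<longleftrightarrow> (\<forall>y\<in>X. f y \<ge> f z + g \<bullet> (y - z))"

definition level_set :: "'a set \<Rightarrow> ('a \<Rightarrow> real) \<Rightarrow> real \<Rightarrow> 'a set" where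
  "level_set X f l = {x \<in> X. f x \<le> l}"

definition localizer :: "'a::real_normed_vector set \<Rightarrow> ('a \<Rightarrow> real) \<Rightarrow> real \<Rightarrow> 'a set \<Rightarrow> bool" where
  "localizer X f l X' \<longleftrightarrow> convex X' \<and> compact X' \<and> level_set X f l \<subseteq> X' \<and> X' \<subseteq> X"

end

theory Submission
  imports Defs
begin

text \<open>
  A cutting plane h(z, -) taken at a point z of X underestimates f on X. So it never cuts off
  a point of the level set {f \<le> l}: every X'_k stays a localizer, and
  min {l, inf of h(xl_k, -) over X'_(k-1)} is a lower bound for inf f; while that bound is below l,
  the cut region S k is nonempty. As x_k minimises d over the convex set S k, the first-order
  optimality condition \<langle>\<nabla>d(x_k), y - x_k\<rangle> \<ge> 0 on S k is exactly the inclusion of S k in the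
  half-space Ov k. The gap bounds are arithmetic in l = \<beta> lb + (1 - \<beta>) f(p), read off the two
  termination tests.
\<close>

lemma convex_min_imp_derivative_nonneg:
  fixes \<psi> :: "'a::real_normed_vector \<Rightarrow> real"
  assumes "convex C" "u \<in> C" "y \<in> C"
    and der: "(\<psi> has_derivative D) (at u within C)"
    and min: "\<forall>z\<in>C. \<psi> u \<le> \<psi> z"
  shows "0 \<le> D (y - u)"
proof (rule ccontr)
  assume neg: "\<not> 0 \<le> D (y - u)"
  define \<gamma> where "\<gamma> t = u + t *\<^sub>R (y - u)" for t :: real
  have seg: "\<gamma> ` {0..1} \<subseteq> C"
  proof clarify
    fix t :: real assume "t \<in> {0..1}"
    then have "(1 - t) *\<^sub>R u + t *\<^sub>R y \<in> C"
      using assms(1-3) by (intro convexD) auto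
    then show "\<gamma> t \<in> C" by (simp add: \<gamma>_def algebra_simps)
  qed
  have "(\<gamma> has_derivative (\<lambda>s. s *\<^sub>R (y - u))) (at 0 within {0..1})"
    unfolding \<gamma>_def by (auto intro!: derivative_eq_intros)
  moreover have "(\<psi> has_derivative D) (at (\<gamma> 0) within \<gamma> ` {0..1})"
    using has_derivative_subset[OF der seg] by (simp add: \<gamma>_def)
  ultimately have "((\<psi> \<circ> \<gamma>) has_derivative D \<circ> (\<lambda>s. s *\<^sub>R (y - u))) (at 0 within {0..1})"
    by (rule diff_chain_within)
  then have "((\<psi> \<circ> \<gamma>) has_real_derivative D (y - u)) (at 0 within {0..1})"
    using linear_cmul[OF has_derivative_linear[OF der]]
    by (auto simp: has_field_derivative_def o_def mult.commute elim!: has_derivative_eq_rhs)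
  from has_real_derivative_neg_dec_right[OF this] neg
  obtain e where "e > 0" and dec: "\<And>t. 0 < t \<Longrightarrow> t \<le> 1 \<Longrightarrow> t < e \<Longrightarrow> \<psi> (\<gamma> t) < \<psi> (\<gamma> 0)"
    by fastforce
  define t where "t = min (e / 2) 1"
  have "0 < t" "t \<le> 1" "t < e" using \<open>e > 0\<close> by (auto simp: t_def)
  then have "\<psi> (\<gamma> t) < \<psi> u" using dec by (simp add: \<gamma>_def)
  moreover have "\<gamma> t \<in> C" using seg \<open>0 < t\<close> \<open>t \<le> 1\<close> by auto
  ultimately show False using min by fastforce
qed

lemma subgradient_inequality:
  "is_subgradient X f z g \<Longrightarrow> y \<in> X \<Longrightarrow> f z + g \<bullet> (y - z) \<le> f y"
  by (simp add: is_subgradient_def)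

lemma bdd_below_affine_image:
  fixes b c :: "'a::real_inner"
  shows "compact A \<Longrightarrow> bdd_below ((\<lambda>y. a + b \<bullet> (y - c)) ` A)"
  by (intro bounded_imp_bdd_below compact_imp_bounded compact_continuous_image)
     (auto intro!: continuous_intros)

lemma bdd_below_image_if_subgradient:
  fixes X :: "'a::real_inner set"
  assumes "compact X" "z \<in> X" "is_subgradient X f z g"
  shows "bdd_below (f ` X)"
proof -
  obtain B where "\<forall>y\<in>X. B \<le> f z + g \<bullet> (y - z)"
    using bdd_below_affine_image[OF \<open>compact X\<close>] by (fastforce simp: bdd_below_def)
  then have "\<forall>y\<in>X. B \<le> f y" using assms(3) subgradient_inequality by fastforce
  then show ?thesis by (auto simp: bdd_below_def)
qed

lemma level_set_subset_cut:
  assumes "is_subgradient X f z g" "localizer X f l X'"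
  shows "level_set X f l \<subseteq> {y \<in> X'. f z + g \<bullet> (y - z) \<le> l}"
  using assms subgradient_inequality[OF assms(1)]
  by (fastforce simp: localizer_def level_set_def)

lemma localizer_cut:
  assumes "compact X" "is_subgradient X f z g" "localizer X f l X'"
    and "closed Y" "convex Y" "{y \<in> X'. f z + g \<bullet> (y - z) \<le> l} \<subseteq> Y" "Y \<subseteq> X"
  shows "localizer X f l Y"
proof -
  have "compact Y" using compact_Int_closed[OF \<open>compact X\<close> \<open>closed Y\<close>] \<open>Y \<subseteq> X\<close>
    by (simp add: Int_absorb1)
  then show ?thesis
    using assms level_set_subset_cut[OF assms(2,3)] by (auto simp: localizer_def)
qed

lemma localizer_cut_lower_bound:
  fixes X :: "'a::real_inner set"
  assumes "X \<noteq> {}" "is_subgradient X f z g" "localizer X f l X'"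
  shows "(if X' = {} then l else min l (Inf ((\<lambda>y. f z + g \<bullet> (y - z)) ` X'))) \<le> Inf (f ` X)"
    (is "?cut \<le> _")
proof (rule ccontr)
  assume "\<not> ?cut \<le> Inf (f ` X)"
  then obtain y where y: "y \<in> X" "f y < ?cut"
    using cInf_lessD[of "f ` X" ?cut] \<open>X \<noteq> {}\<close> by force
  then have "y \<in> X'" "f z + g \<bullet> (y - z) \<le> f y"
    using assms(2,3) subgradient_inequality[OF assms(2) \<open>y \<in> X\<close>]
    by (auto simp: localizer_def level_set_def split: if_splits)
  moreover have "bdd_below ((\<lambda>y. f z + g \<bullet> (y - z)) ` X')"
    using assms(3) by (simp add: localizer_def bdd_below_affine_image)
  ultimately have "Inf ((\<lambda>y. f z + g \<bullet> (y - z)) ` X') \<le> f y"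
    by (meson cInf_lower2 imageI)
  then have "?cut \<le> f y" using \<open>y \<in> X'\<close> by auto
  with y show False by simp
qed

lemma convex_cut:
  fixes g :: "'a::real_inner"
  assumes "convex C"
  shows "convex {y \<in> C. a + g \<bullet> (y - z) \<le> l}"
proof -
  have "{y \<in> C. a + g \<bullet> (y - z) \<le> l} = C \<inter> {y. g \<bullet> y \<le> l - a + g \<bullet> z}"
    by (auto simp: inner_diff_right)
  then show ?thesis using assms by (simp add: convex_Int convex_halfspace_le)
qed

lemma gap_bound_lower_termination:
  fixes lb fp l fu fl \<beta> \<theta> :: real
  assumes "lb \<le> fp" "0 \<le> \<beta>" "\<beta> \<le> 1" "\<theta> \<le> 1"
    and "l = \<beta> * lb + (1 - \<beta>) * fp" "fu \<le> fp" "l - \<theta> * (l - lb) \<le> fl"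
  shows "fu - fl \<le> (1 - (1 - \<theta>) * min \<beta> (1 - \<beta>)) * (fp - lb)"
proof -
  have "(1 - \<theta>) * min \<beta> (1 - \<beta>) * (fp - lb) \<le> (1 - \<theta>) * (1 - \<beta>) * (fp - lb)"
    using assms by (intro mult_right_mono mult_left_mono) auto
  moreover have "fp - (l - \<theta> * (l - lb)) = (fp - lb) - (1 - \<theta>) * (1 - \<beta>) * (fp - lb)"
    unfolding assms(5) by (simp add: algebra_simps)
  ultimately show ?thesis using assms(6,7) by (simp add: algebra_simps)
qed

lemma gap_bound_upper_termination:
  fixes lb fp l fu fl \<beta> \<theta> :: real
  assumes "lb \<le> fp" "0 \<le> \<beta>" "\<beta> \<le> 1" "\<theta> \<le> 1"
    and "l = \<beta> * lb + (1 - \<beta>) * fp" "fu \<le> l + \<theta> * (fp - l)" "lb \<le> fl"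
  shows "fu - fl \<le> (1 - (1 - \<theta>) * min \<beta> (1 - \<beta>)) * (fp - lb)"
proof -
  have "(1 - \<theta>) * min \<beta> (1 - \<beta>) * (fp - lb) \<le> (1 - \<theta>) * \<beta> * (fp - lb)"
    using assms by (intro mult_right_mono mult_left_mono) auto
  moreover have "l + \<theta> * (fp - l) - lb = (fp - lb) - (1 - \<theta>) * \<beta> * (fp - lb)"
    unfolding assms(5) by (simp add: algebra_simps)
  ultimately show ?thesis using assms(6,7) by (simp add: algebra_simps)
qed

locale apl_run =
  fixes X :: "'a::euclidean_space set" and f :: "'a \<Rightarrow> real" and f' :: "'a \<Rightarrow> 'a"
    and \<omega> :: "'a \<Rightarrow> real" and g\<omega> :: "'a \<Rightarrow> 'a"
    and p :: 'a and lb \<beta> \<theta> :: real and \<alpha> :: "nat \<Rightarrow> real"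
    and xu xl x :: "nat \<Rightarrow> 'a" and flow fup :: "nat \<Rightarrow> real" and Xp :: "nat \<Rightarrow> 'a set"
    and l :: real and h :: "'a \<Rightarrow> 'a \<Rightarrow> real" and d :: "'a \<Rightarrow> real"
    and S Ov :: "nat \<Rightarrow> 'a set" and T1 T3 reached :: "nat \<Rightarrow> bool"
  assumes X: "convex X" "compact X" "X \<noteq> {}"
    and fsub: "\<forall>z\<in>X. is_subgradient X f z (f' z)"
    and \<omega>diff: "\<forall>z\<in>X. (\<omega> has_derivative (\<lambda>v. g\<omega> z \<bullet> v)) (at z within X)"
    and p: "p \<in> X"
    and lb: "lb \<le> Inf (f ` X)"
    and \<beta>: "0 < \<beta>" "\<beta> < 1" and \<theta>: "0 < \<theta>" "\<theta> < 1"
    and \<alpha>: "\<forall>k\<ge>1. 0 < \<alpha> k \<and> \<alpha> k \<le> 1"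
    and l_def: "l = \<beta> * lb + (1 - \<beta>) * f p"
    and h_def: "h = (\<lambda>z y. f z + f' z \<bullet> (y - z))"
    and d_def: "d = (\<lambda>y. \<omega> y - (\<omega> (x 0) + g\<omega> (x 0) \<bullet> (y - x 0)))"
    and S_def: "S = (\<lambda>k. {y \<in> Xp (k - 1). h (xl k) y \<le> l})"
    and Ov_def: "Ov = (\<lambda>k. {y \<in> X. (g\<omega> (x k) - g\<omega> (x 0)) \<bullet> (y - x k) \<ge> 0})"
    and T1_def: "T1 = (\<lambda>k. flow k \<ge> l - \<theta> * (l - flow 0))"
    and T3_def: "T3 = (\<lambda>k. fup k \<le> l + \<theta> * (fup 0 - l))"
    and reached_def: "reached = (\<lambda>k. \<forall>j. 1 \<le> j \<and> j < k \<longrightarrow> \<not> T1 j \<and> S j \<noteq> {} \<and> \<not> T3 j \<and> S j \<subseteq> Ov j)"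
    and step0: "xu 0 = p" "fup 0 = f p" "flow 0 = lb" "x 0 \<in> X" "localizer X f l (Xp 0)"
    and step1: "\<forall>k\<ge>1. reached k \<longrightarrow>
        xl k = (1 - \<alpha> k) *\<^sub>R xu (k - 1) + \<alpha> k *\<^sub>R x (k - 1)
      \<and> flow k = max (flow (k - 1))
           (if Xp (k - 1) = {} then l else min l (Inf (h (xl k) ` Xp (k - 1))))"
    and step2: "\<forall>k\<ge>1. reached k \<and> \<not> T1 k \<and> S k \<noteq> {} \<longrightarrow>
        x k \<in> S k \<and> (\<forall>y\<in>S k. d (x k) \<le> d y)"
    and step3: "\<forall>k\<ge>1. reached k \<and> \<not> T1 k \<and> S k \<noteq> {} \<longrightarrow>
        fup k = min (fup (k - 1)) (f (\<alpha> k *\<^sub>R x k + (1 - \<alpha> k) *\<^sub>R xu (k - 1)))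
      \<and> xu k \<in> X \<and> f (xu k) = fup k"
    and step4: "\<forall>k\<ge>1. reached k \<and> \<not> T1 k \<and> S k \<noteq> {} \<and> \<not> T3 k \<and> S k \<subseteq> Ov k \<longrightarrow>
        closed (Xp k) \<and> convex (Xp k) \<and> S k \<subseteq> Xp k \<and> Xp k \<subseteq> Ov k"
begin

lemma reached_mono: "reached k \<Longrightarrow> j \<le> k \<Longrightarrow> reached j"
  by (auto simp: reached_def)

lemma reached_SucD:
  "reached (Suc k) \<Longrightarrow> 1 \<le> k \<Longrightarrow> \<not> T1 k \<and> S k \<noteq> {} \<and> \<not> T3 k \<and> S k \<subseteq> Ov k"
  by (simp add: reached_def)

lemma bdd_below_values: "bdd_below (f ` X)"
  by (rule bdd_below_image_if_subgradient[OF X(2) p]) (use fsub p in blast)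

lemma Inf_le_value: "y \<in> X \<Longrightarrow> Inf (f ` X) \<le> f y"
  using bdd_below_values by (simp add: cInf_lower)

lemma lb_le_fp: "lb \<le> f p"
  using lb Inf_le_value[OF p] by simp

lemma lb_le_level: "lb \<le> l"
proof -
  have "0 \<le> (1 - \<beta>) * (f p - lb)" using \<beta> lb_le_fp by simp
  then show ?thesis by (simp add: l_def algebra_simps)
qed

lemma S_eq: "S k = {y \<in> Xp (k - 1). f (xl k) + f' (xl k) \<bullet> (y - xl k) \<le> l}"
  by (simp add: S_def h_def)

lemma flow_Suc:
  "reached (Suc k) \<Longrightarrow> flow (Suc k) = max (flow k)
     (if Xp k = {} then l else min l (Inf ((\<lambda>y. f (xl (Suc k)) + f' (xl (Suc k)) \<bullet> (y - xl (Suc k))) ` Xp k)))"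
  using step1 by (simp add: h_def)

lemma xl_Suc_in_X:
  assumes "reached (Suc k)" "x k \<in> X" "xu k \<in> X"
  shows "xl (Suc k) \<in> X"
proof -
  have "xl (Suc k) = (1 - \<alpha> (Suc k)) *\<^sub>R xu k + \<alpha> (Suc k) *\<^sub>R x k"
    using step1 assms(1) by simp
  moreover have "0 < \<alpha> (Suc k)" "\<alpha> (Suc k) \<le> 1" using \<alpha> by auto
  ultimately show ?thesis using convexD[OF X(1) assms(3,2)] by simp
qed

lemma iterates_invariant: "reached (Suc k) \<Longrightarrow> localizer X f l (Xp k) \<and> x k \<in> X \<and> xu k \<in> X"
proof (induction k)
  case 0
  then show ?case using step0 p by simp
next
  case (Suc k)
  have R: "reached (Suc k)" using reached_mono[OF Suc.prems] by simp
  with Suc.IH have L: "localizer X f l (Xp k)" and iter: "x k \<in> X" "xu k \<in> X" by auto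
  have cont: "\<not> T1 (Suc k)" "S (Suc k) \<noteq> {}" "\<not> T3 (Suc k)" "S (Suc k) \<subseteq> Ov (Suc k)"
    using reached_SucD[OF Suc.prems] by auto
  have "xl (Suc k) \<in> X" using xl_Suc_in_X[OF R iter] .
  moreover have "closed (Xp (Suc k))" "convex (Xp (Suc k))" "S (Suc k) \<subseteq> Xp (Suc k)"
    "Xp (Suc k) \<subseteq> X"
    using step4 R cont Ov_def by fastforce+
  ultimately have "localizer X f l (Xp (Suc k))"
    using localizer_cut[OF X(2) fsub[rule_format] L] S_eq[of "Suc k"] by simp
  moreover have "x (Suc k) \<in> S (Suc k)" "xu (Suc k) \<in> X"
    using step2 step3 R cont by auto
  moreover have "S (Suc k) \<subseteq> X" using L S_eq[of "Suc k"] by (auto simp: localizer_def)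
  ultimately show ?case by blast
qed

lemma localizers: "reached (Suc k) \<Longrightarrow> localizer X f l (Xp k)"
  using iterates_invariant by blast

lemma flow_mono: "1 \<le> k \<Longrightarrow> reached k \<Longrightarrow> flow (k - 1) \<le> flow k"
  using step1 by simp

lemma flow_bounds: "reached k \<Longrightarrow> lb \<le> flow k \<and> flow k \<le> Inf (f ` X)"
proof (induction k)
  case 0
  then show ?case using step0 lb by simp
next
  case (Suc k)
  then have "lb \<le> flow k \<and> flow k \<le> Inf (f ` X)" using reached_mono by simp
  moreover have "xl (Suc k) \<in> X"
    using xl_Suc_in_X iterates_invariant Suc.prems by blast
  ultimately show ?case
    using flow_Suc[OF Suc.prems] localizer_cut_lower_bound[OF X(3) _ localizers[OF Suc.prems]] fsub
    by fastforce
qed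

lemma cut_region_nonempty:
  assumes "1 \<le> k" "reached k" "\<not> T1 k"
  shows "S k \<noteq> {}"
proof -
  obtain j where k: "k = Suc j" using assms(1) by (cases k) auto
  have "0 \<le> \<theta> * (l - lb)" using lb_le_level \<theta> by simp
  then have "flow k < l" using assms(3) step0 by (simp add: T1_def)
  moreover have "flow k = max (flow j)
     (if Xp j = {} then l else min l (Inf ((\<lambda>y. f (xl k) + f' (xl k) \<bullet> (y - xl k)) ` Xp j)))"
    using flow_Suc[of j] assms(2) by (simp add: k)
  ultimately have "Xp j \<noteq> {}" and "Inf ((\<lambda>y. f (xl k) + f' (xl k) \<bullet> (y - xl k)) ` Xp j) < l"
    by (auto split: if_splits)
  then obtain y where "y \<in> Xp j" "f (xl k) + f' (xl k) \<bullet> (y - xl k) < l"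
    using cInf_lessD[of "(\<lambda>y. f (xl k) + f' (xl k) \<bullet> (y - xl k)) ` Xp j"] by blast
  then show ?thesis using S_eq[of k] by (auto simp: k)
qed

lemma cut_region_subset_Ov:
  assumes "1 \<le> k" "reached k" "\<not> T1 k"
  shows "S k \<subseteq> Ov k"
proof
  fix y assume "y \<in> S k"
  obtain j where k: "k = Suc j" using assms(1) by (cases k) auto
  have L: "localizer X f l (Xp j)" using localizers assms(2) k by simp
  have "S k \<subseteq> Xp j" using S_eq[of k] by (auto simp: k)
  with L have SX: "S k \<subseteq> X" by (auto simp: localizer_def)
  have "convex (S k)"
    using convex_cut[of "Xp j"] L S_eq[of k] by (simp add: k localizer_def)
  have xk: "x k \<in> S k" "\<forall>z\<in>S k. d (x k) \<le> d z"
    using step2[rule_format, OF assms(1)] assms(2,3) cut_region_nonempty[OF assms] by simp_all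
  have "(\<omega> has_derivative (\<lambda>v. g\<omega> (x k) \<bullet> v)) (at (x k) within X)"
    using \<omega>diff xk(1) SX by blast
  moreover have "((\<lambda>y. \<omega> (x 0) + g\<omega> (x 0) \<bullet> (y - x 0)) has_derivative (\<lambda>v. g\<omega> (x 0) \<bullet> v))
      (at (x k) within X)"
    by (auto intro!: derivative_eq_intros)
  ultimately have "(d has_derivative (\<lambda>v. (g\<omega> (x k) - g\<omega> (x 0)) \<bullet> v)) (at (x k) within X)"
    unfolding d_def inner_diff_left by (rule has_derivative_diff)
  then have "(d has_derivative (\<lambda>v. (g\<omega> (x k) - g\<omega> (x 0)) \<bullet> v)) (at (x k) within S k)"
    using SX by (rule has_derivative_subset)
  from convex_min_imp_derivative_nonneg[OF \<open>convex (S k)\<close> xk(1) \<open>y \<in> S k\<close> this xk(2)]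
  show "y \<in> Ov k" using SX \<open>y \<in> S k\<close> by (simp add: Ov_def subset_iff)
qed

lemma fup_invariant: "reached (Suc k) \<Longrightarrow> f (xu k) = fup k \<and> fup k \<le> f p"
proof (induction k)
  case 0
  then show ?case using step0 by simp
next
  case (Suc k)
  then have "f (xu k) = fup k \<and> fup k \<le> f p" using reached_mono by simp
  moreover have "reached (Suc k)" "\<not> T1 (Suc k)" "S (Suc k) \<noteq> {}"
    using reached_mono[OF Suc.prems] reached_SucD[OF Suc.prems] by auto
  ultimately show ?case using step3 by fastforce
qed

lemma fup_step:
  assumes "1 \<le> k" "reached k" "\<not> T1 k"
  shows "fup k \<le> fup (k - 1) \<and> Inf (f ` X) \<le> fup k"
proof -
  have "fup k = min (fup (k - 1)) (f (\<alpha> k *\<^sub>R x k + (1 - \<alpha> k) *\<^sub>R xu (k - 1)))"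
    and "xu k \<in> X" "f (xu k) = fup k"
    using step3[rule_format, OF assms(1)] assms(2,3) cut_region_nonempty[OF assms] by simp_all
  then show ?thesis using Inf_le_value[of "xu k"] by simp
qed

lemma gap_at_lower_termination:
  assumes "1 \<le> k" "reached k" "T1 k"
  shows "f (xu (k - 1)) - flow k \<le> (1 - (1 - \<theta>) * min \<beta> (1 - \<beta>)) * (f p - lb)"
proof (rule gap_bound_lower_termination[OF lb_le_fp _ _ _ l_def])
  show "f (xu (k - 1)) \<le> f p" using fup_invariant[of "k - 1"] assms(1,2) by simp
  show "l - \<theta> * (l - lb) \<le> flow k" using assms(3) step0 by (simp add: T1_def)
qed (use \<beta> \<theta> in auto)

lemma gap_at_upper_termination:
  assumes "1 \<le> k" "reached k" "\<not> T1 k" "T3 k"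
  shows "f (xu k) - flow k \<le> (1 - (1 - \<theta>) * min \<beta> (1 - \<beta>)) * (f p - lb)"
proof (rule gap_bound_upper_termination[OF lb_le_fp _ _ _ l_def])
  show "f (xu k) \<le> l + \<theta> * (f p - l)"
    using step3[rule_format, OF assms(1)] assms cut_region_nonempty[OF assms(1-3)] step0
    by (simp add: T3_def)
  show "lb \<le> flow k" using flow_bounds assms(2) by blast
qed (use \<beta> \<theta> in auto)

end

theorem lemma3p2:
  fixes X :: "'a::euclidean_space set" and nrm :: "'a \<Rightarrow> real"
    and f :: "'a \<Rightarrow> real" and f' :: "'a \<Rightarrow> 'a"
    and \<omega> :: "'a \<Rightarrow> real" and g\<omega> :: "'a \<Rightarrow> 'a" and \<sigma> :: real
    and p :: 'a and lb \<beta> \<theta> :: real and \<alpha> :: "nat \<Rightarrow> real"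
    and xu xl x :: "nat \<Rightarrow> 'a" and flow fup :: "nat \<Rightarrow> real" and Xp :: "nat \<Rightarrow> 'a set"
    and l q :: real and h :: "'a \<Rightarrow> 'a \<Rightarrow> real" and d :: "'a \<Rightarrow> real"
    and S Ov :: "nat \<Rightarrow> 'a set" and T1 T3 reached :: "nat \<Rightarrow> bool"
  assumes X: "convex X" "compact X" "X \<noteq> {}"
    and nrm: "is_norm nrm"
    and fconv: "convex_on X f"
    and fsub: "\<forall>z\<in>X. is_subgradient X f z (f' z)"
    and \<omega>diff: "\<forall>z\<in>X. (\<omega> has_derivative (\<lambda>v. g\<omega> z \<bullet> v)) (at z within X)"
    and \<sigma>: "\<sigma> > 0"
    and \<omega>sc: "\<forall>y\<in>X. \<forall>z\<in>X. (g\<omega> y - g\<omega> z) \<bullet> (y - z) \<ge> \<sigma> * (nrm (y - z))\<^sup>2"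
    and p: "p \<in> X"
    and lb: "lb \<le> Inf (f ` X)"
    and \<beta>: "0 < \<beta>" "\<beta> < 1" and \<theta>: "0 < \<theta>" "\<theta> < 1"
    and \<alpha>: "\<forall>k\<ge>1. 0 < \<alpha> k \<and> \<alpha> k \<le> 1"
  defines "l \<equiv> \<beta> * lb + (1 - \<beta>) * f p"
    and "h \<equiv> (\<lambda>z y. f z + f' z \<bullet> (y - z))"
    and "d \<equiv> (\<lambda>y. \<omega> y - (\<omega> (x 0) + g\<omega> (x 0) \<bullet> (y - x 0)))"
    and "S \<equiv> (\<lambda>k. {y \<in> Xp (k - 1). h (xl k) y \<le> l})"
    and "Ov \<equiv> (\<lambda>k. {y \<in> X. (g\<omega> (x k) - g\<omega> (x 0)) \<bullet> (y - x k) \<ge> 0})"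
    and "T1 \<equiv> (\<lambda>k. flow k \<ge> l - \<theta> * (l - flow 0))"
    and "T3 \<equiv> (\<lambda>k. fup k \<le> l + \<theta> * (fup 0 - l))"
    and "reached \<equiv> (\<lambda>k. \<forall>j. 1 \<le> j \<and> j < k \<longrightarrow> \<not> T1 j \<and> S j \<noteq> {} \<and> \<not> T3 j \<and> S j \<subseteq> Ov j)"
    and "q \<equiv> 1 - (1 - \<theta>) * min \<beta> (1 - \<beta>)"
  assumes step0: "xu 0 = p" "fup 0 = f p" "flow 0 = lb" "x 0 \<in> X" "localizer X f l (Xp 0)"
    and step1: "\<forall>k\<ge>1. reached k \<longrightarrow>
        xl k = (1 - \<alpha> k) *\<^sub>R xu (k - 1) + \<alpha> k *\<^sub>R x (k - 1)
      \<and> flow k = max (flow (k - 1))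
           (if Xp (k - 1) = {} then l else min l (Inf (h (xl k) ` Xp (k - 1))))"
    and step2: "\<forall>k\<ge>1. reached k \<and> \<not> T1 k \<and> S k \<noteq> {} \<longrightarrow>
        x k \<in> S k \<and> (\<forall>y\<in>S k. d (x k) \<le> d y)"
    and step3: "\<forall>k\<ge>1. reached k \<and> \<not> T1 k \<and> S k \<noteq> {} \<longrightarrow>
        fup k = min (fup (k - 1)) (f (\<alpha> k *\<^sub>R x k + (1 - \<alpha> k) *\<^sub>R xu (k - 1)))
      \<and> xu k \<in> X \<and> f (xu k) = fup k"
    and step4: "\<forall>k\<ge>1. reached k \<and> \<not> T1 k \<and> S k \<noteq> {} \<and> \<not> T3 k \<and> S k \<subseteq> Ov k \<longrightarrow>
        closed (Xp k) \<and> convex (Xp k) \<and> S k \<subseteq> Xp k \<and> Xp k \<subseteq> Ov k"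
  shows
    "(\<forall>k. reached (Suc k) \<longrightarrow> localizer X f l (Xp k))
   \<and> (flow 0 \<le> Inf (f ` X) \<and> Inf (f ` X) \<le> fup 0
      \<and> (\<forall>k\<ge>1. reached k \<longrightarrow> flow (k - 1) \<le> flow k \<and> flow k \<le> Inf (f ` X))
      \<and> (\<forall>k\<ge>1. reached k \<and> \<not> T1 k \<longrightarrow> fup k \<le> fup (k - 1) \<and> Inf (f ` X) \<le> fup k))
   \<and> (\<forall>k\<ge>1. reached k \<and> \<not> T1 k \<longrightarrow> S k \<noteq> {})
   \<and> (\<forall>k\<ge>1. reached k \<and> \<not> T1 k \<and> \<not> T3 k \<longrightarrow> {} \<noteq> S k \<and> S k \<subseteq> Ov k)
   \<and> (\<forall>k\<ge>1. reached k \<and> T1 k \<longrightarrow> f (xu (k - 1)) - flow k \<le> q * (f p - lb))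
   \<and> (\<forall>k\<ge>1. reached k \<and> \<not> T1 k \<and> T3 k \<longrightarrow> f (xu k) - flow k \<le> q * (f p - lb))"
proof -
  interpret apl_run X f f' \<omega> g\<omega> p lb \<beta> \<theta> \<alpha> xu xl x flow fup Xp l h d S Ov T1 T3 reached
    by (unfold_locales; (rule assms)?;
        simp only: l_def h_def d_def S_def Ov_def T1_def T3_def reached_def)
  have "\<forall>k. reached (Suc k) \<longrightarrow> localizer X f l (Xp k)"
    using localizers by blast
  moreover have "flow 0 \<le> Inf (f ` X)" "Inf (f ` X) \<le> fup 0"
    using step0(2,3) lb Inf_le_value[OF p] by simp_all
  moreover have "\<forall>k\<ge>1. reached k \<longrightarrow> flow (k - 1) \<le> flow k \<and> flow k \<le> Inf (f ` X)"
    using flow_mono flow_bounds by blast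
  moreover have "\<forall>k\<ge>1. reached k \<and> \<not> T1 k \<longrightarrow> fup k \<le> fup (k - 1) \<and> Inf (f ` X) \<le> fup k"
    using fup_step by blast
  moreover have "\<forall>k\<ge>1. reached k \<and> \<not> T1 k \<longrightarrow> S k \<noteq> {}"
    using cut_region_nonempty by blast
  moreover have "\<forall>k\<ge>1. reached k \<and> \<not> T1 k \<and> \<not> T3 k \<longrightarrow> {} \<noteq> S k \<and> S k \<subseteq> Ov k"
    using cut_region_nonempty cut_region_subset_Ov by blast
  moreover have "\<forall>k\<ge>1. reached k \<and> T1 k \<longrightarrow> f (xu (k - 1)) - flow k \<le> q * (f p - lb)"
    using gap_at_lower_termination by (simp add: q_def)
  moreover have "\<forall>k\<ge>1. reached k \<and> \<not> T1 k \<and> T3 k \<longrightarrow> f (xu k) - flow k \<le> q * (f p - lb)"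
    using gap_at_upper_termination by (simp add: q_def)
  ultimately show ?thesis by simp
qed

end
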